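(* Let $D\ge2$ be fixed and $\lambda>0$. Let $\Gamma$ be a complete $D$-ary tree of depth $h\ge\bar h$ such that $K=o(n)$. Then for a realization $G$ of the graph under $\mathbb{P}_1$, the overlap of any estimator $\hat{\mathcal K}$ of the planted set satisfies $\mathrm{ov}(\hat{\mathcal K})\le(1-\delta)K$ for some $\delta>0$.
   Context: Model: $\mathbb{P}_1$: $G=G_0\cup G'$ with $G_0\sim\mathcal G(n,\lambda/n)$ and $G'$ the image of $\Gamma$ under an injection $\sigma$ of its vertex set into $[n]$ chosen uniformly at random independently of $G_0$; $\mathcal K$ is the image of $\sigma$. An estimator is a set $\hat{\mathcal K}$ of $K$ nodes computed from $G$; $\mathrm{ov}(\hat{\mathcal K})=\sum_{i\in[n]}\mathbb{P}_1(i\in\hat{\mathcal K}\cap\mathcal K)$. A complete $D$-ary tree of depth $h$ has root at depth $0$, each vertex at depth $<h$ has $D$ children, and $K=(D^{h+1}-1)/(D-1)$ vertices. $p_h$ is the probability that a Galton–Watson tree with offspring law $\mathrm{Poi}(\lambda)$ contains a complete $D$-ary tree of depth $h$ rooted at its root; $\bar h=\inf\{h>0:p_h<1/n\}$. *)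

theory Defs
  imports "HOL-Probability.Probability" "HOL-Library.Landau_Symbols"
begin

datatype rtree = Node "rtree list"

text \<open>Galton--Watson tree with offspring law Poi(lambda), truncated at depth h
  (vertices at depth h are leaves).  The truncation does not affect events
  concerning the first h generations.\<close>
primrec gw_tree :: "real \<Rightarrow> nat \<Rightarrow> rtree pmf" where
  "gw_tree lam 0 = return_pmf (Node [])"
| "gw_tree lam (Suc h) =
     do { k \<leftarrow> poisson_pmf lam; ts \<leftarrow> replicate_pmf k (gw_tree lam h); return_pmf (Node ts) }"

primrec contains_Dary :: "nat \<Rightarrow> nat \<Rightarrow> rtree \<Rightarrow> bool" where
  "contains_Dary D 0 t = True"
| "contains_Dary D (Suc h) t =
     (case t of Node ts \<Rightarrow> D \<le> length (filter (contains_Dary D h) ts))"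

definition p_gw :: "nat \<Rightarrow> real \<Rightarrow> nat \<Rightarrow> real" where
  "p_gw D lam h = measure_pmf.prob (gw_tree lam h) {t. contains_Dary D h t}"

definition hbar :: "nat \<Rightarrow> real \<Rightarrow> nat \<Rightarrow> enat" where
  "hbar D lam n = (if \<exists>h>0. p_gw D lam h < 1 / real n
                    then enat (LEAST h. h > 0 \<and> p_gw D lam h < 1 / real n) else \<infinity>)"

text \<open>Vertex set [n] = {0..<n}; a graph is its set of edges (2-element sets).\<close>
definition all_edges :: "nat \<Rightarrow> nat set set" where
  "all_edges n = {e. \<exists>i j. i < n \<and> j < n \<and> i \<noteq> j \<and> e = {i, j}}"

definition erdos_renyi :: "nat \<Rightarrow> real \<Rightarrow> nat set set pmf" where
  "erdos_renyi n p =
     map_pmf (\<lambda>f. {e \<in> all_edges n. f e}) (Pi_pmf (all_edges n) False (\<lambda>_. bernoulli_pmf p))"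

text \<open>Complete D-ary tree of depth h: vertices are words over {0..<D} of length at most h
  (root = empty word), and each word xs is joined to its children xs @ [c].\<close>
definition dary_vertices :: "nat \<Rightarrow> nat \<Rightarrow> nat list set" where
  "dary_vertices D h = {xs. length xs \<le> h \<and> set xs \<subseteq> {..<D}}"

definition dary_edges :: "nat \<Rightarrow> nat \<Rightarrow> nat list set set" where
  "dary_edges D h = {{xs, xs @ [c]} | xs c. length xs < h \<and> set xs \<subseteq> {..<D} \<and> c < D}"

definition dary_size :: "nat \<Rightarrow> nat \<Rightarrow> nat" where
  "dary_size D h = (D ^ (h + 1) - 1) div (D - 1)"

definition random_injection :: "nat \<Rightarrow> nat \<Rightarrow> nat \<Rightarrow> (nat list \<Rightarrow> nat) pmf" where
  "random_injection D h n =
     pmf_of_set {\<sigma> \<in> dary_vertices D h \<rightarrow>\<^sub>E {..<n}. inj_on \<sigma> (dary_vertices D h)}"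

definition planted_model :: "nat \<Rightarrow> real \<Rightarrow> nat \<Rightarrow> nat \<Rightarrow> (nat set set \<times> nat set) pmf" where
  "planted_model D lam h n =
     do { G0 \<leftarrow> erdos_renyi n (lam / real n);
          \<sigma> \<leftarrow> random_injection D h n;
          return_pmf (G0 \<union> (\<lambda>e. \<sigma> ` e) ` dary_edges D h, \<sigma> ` dary_vertices D h) }"

definition estimator :: "nat \<Rightarrow> nat \<Rightarrow> (nat set set \<Rightarrow> nat set) \<Rightarrow> bool" where
  "estimator n K est = (\<forall>G. est G \<subseteq> {..<n} \<and> card (est G) = K)"

definition overlap :: "nat \<Rightarrow> real \<Rightarrow> nat \<Rightarrow> nat \<Rightarrow> (nat set set \<Rightarrow> nat set) \<Rightarrow> real" where
  "overlap D lam h n est =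
     (\<Sum>i<n. measure_pmf.prob (planted_model D lam h n) {(G, S). i \<in> est G \<inter> S})"

end

theory Submission
  imports Defs
begin

(* A switching argument. Describe a realisation of P_1 by the noise edges f of G0 and the
  embedding \<sigma> of the tree. Take a leaf p @ [0], its image a = \<sigma> (p @ [0]) and a vertex b
  outside the planted set K, and suppose that f joins \<sigma> p to b but not to a, that \<sigma> p has no
  other noise neighbour outside K, and that neither a nor b has a noise edge into the rest of K.
  Moving the leaf from a to b and the noise edge from {\<sigma> p, b} to {\<sigma> p, a} is then a
  measure-preserving involution that does not change G. So no estimator can tell a from b: in
  expectation it misclassifies one vertex of {a, b} for each such configuration. The pairs {a, b}
  of different swappable triples are disjoint, hence 2 (K - ov), the expected size of the
  symmetric difference of K and the estimate, is at least the expected number of swappable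
  triples. That number is at least D^(h-1) (n - K) q (1 - q)^(3n+1) with q = \<lambda>/n, which is of
  order K \<lambda> e^(-3\<lambda>) / D once K = o(n). *)

lemma dary_vertices_eq_UN:
  "dary_vertices D h = (\<Union>i\<le>h. {xs. set xs \<subseteq> {..<D} \<and> length xs = i})"
  unfolding dary_vertices_def by auto

lemma finite_dary_vertices: "finite (dary_vertices D h)"
  unfolding dary_vertices_eq_UN by (auto simp: finite_lists_length_eq)

lemma dary_size_eq_sum:
  assumes "D \<ge> 2"
  shows "dary_size D h = (\<Sum>i\<le>h. D ^ i)"
proof -
  have "int (D ^ (h + 1) - 1) = int ((D - 1) * (\<Sum>i\<le>h. D ^ i))"
    using power_diff_1_eq[of "int D" "h + 1"] assms
    by (simp add: of_nat_diff lessThan_Suc_atMost)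
  then have "D ^ (h + 1) - 1 = (D - 1) * (\<Sum>i\<le>h. D ^ i)"
    by (simp only: of_nat_eq_iff)
  then show ?thesis
    using assms unfolding dary_size_def by simp
qed

lemma card_dary_vertices:
  assumes "D \<ge> 2"
  shows "card (dary_vertices D h) = dary_size D h"
proof -
  have "card (dary_vertices D h) = (\<Sum>i\<le>h. card {xs. set xs \<subseteq> {..<D} \<and> length xs = i})"
    unfolding dary_vertices_eq_UN
    by (rule card_UN_disjoint) (auto simp: finite_lists_length_eq)
  then show ?thesis
    using assms by (simp add: card_lists_length_eq dary_size_eq_sum)
qed

lemma dary_size_le:
  assumes "D \<ge> 2"
  shows "dary_size D h \<le> 2 * D ^ h"
  unfolding dary_size_eq_sum[OF assms]
proof (induction h)
  case (Suc h)
  have "(\<Sum>i\<le>Suc h. D ^ i) \<le> 2 * D ^ h + D ^ Suc h"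
    using Suc.IH by simp
  also have "2 * D ^ h \<le> D ^ Suc h"
    using assms by simp
  finally show ?case
    by simp
qed simp

lemma dary_edge_at_leaf:
  assumes "e \<in> dary_edges D h" and "p @ [c] \<in> e" and "length p + 1 = h"
  shows "e = {p, p @ [c]}"
  using assms unfolding dary_edges_def by auto

lemma finite_all_edges: "finite (all_edges n)"
  by (rule finite_subset[of _ "Pow {..<n}"]) (auto simp: all_edges_def)

lemma map_pmf_involution:
  assumes "\<And>x. T (T x) = x" and "\<And>x. pmf M (T x) = pmf M x"
  shows "map_pmf T M = M"
proof (rule pmf_eqI)
  fix x
  have "inj T"
    by (metis assms(1) injI)
  then have "pmf (map_pmf T M) (T (T x)) = pmf M (T x)"
    by (rule pmf_map_inj')
  then show "pmf (map_pmf T M) x = pmf M x"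
    using assms by simp
qed

lemma expectation_pair_pmf:
  fixes g :: "'a \<times> 'b \<Rightarrow> real"
  assumes "finite (set_pmf M)" and "finite (set_pmf N)"
  shows "measure_pmf.expectation (pair_pmf M N) g
    = measure_pmf.expectation N (\<lambda>b. measure_pmf.expectation M (\<lambda>a. g (a, b)))"
proof -
  have "measure_pmf.expectation (pair_pmf M N) g
      = (\<Sum>x\<in>set_pmf M \<times> set_pmf N. g x * pmf (pair_pmf M N) x)"
    using assms by (intro integral_measure_pmf_real) auto
  also have "\<dots> = (\<Sum>a\<in>set_pmf M. \<Sum>b\<in>set_pmf N. g (a, b) * pmf M a * pmf N b)"
    unfolding sum.cartesian_product by (rule sum.cong) (auto simp: pmf_pair)
  also have "\<dots> = (\<Sum>b\<in>set_pmf N. (\<Sum>a\<in>set_pmf M. g (a, b) * pmf M a) * pmf N b)"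
    by (simp add: sum.swap[of _ "set_pmf M"] sum_distrib_right)
  also have "\<dots> = measure_pmf.expectation N (\<lambda>b. measure_pmf.expectation M (\<lambda>a. g (a, b)))"
    using assms by (simp add: integral_measure_pmf_real[of "set_pmf _"])
  finally show ?thesis .
qed

lemma prob_Pi_pmf_bernoulli_pattern:
  assumes "finite A" and "e0 \<in> A" and "B \<subseteq> A" and "e0 \<notin> B" and "0 \<le> q" and "q \<le> 1"
  shows "measure_pmf.prob (Pi_pmf A False (\<lambda>_. bernoulli_pmf q)) {f. f e0 \<and> (\<forall>e\<in>B. \<not> f e)}
    = q * (1 - q) ^ card B"
proof -
  define Bs where "Bs e = (if e = e0 then {True} else if e \<in> B then {False} else UNIV)" for e
  have "{f. f e0 \<and> (\<forall>e\<in>B. \<not> f e)} = Pi A Bs"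
    using assms(2,3,4) by (auto simp: Bs_def Pi_def split: if_splits)
  moreover have "measure_pmf.prob (bernoulli_pmf q) (Bs e)
      = (if e = e0 then q else if e \<in> B then 1 - q else 1)" for e
    using assms(5,6) by (auto simp: Bs_def measure_pmf_single)
  ultimately have "measure_pmf.prob (Pi_pmf A False (\<lambda>_. bernoulli_pmf q)) {f. f e0 \<and> (\<forall>e\<in>B. \<not> f e)}
      = (\<Prod>e\<in>A. if e = e0 then q else if e \<in> B then 1 - q else 1)"
    using assms(1) by (simp add: measure_Pi_pmf_Pi)
  also have "\<dots> = q * (\<Prod>e\<in>A - {e0}. if e \<in> B then 1 - q else 1)"
    using assms(1,2) by (simp add: prod.remove)
  also have "(\<Prod>e\<in>A - {e0}. if e \<in> B then 1 - q else 1) = (1 - q) ^ card B"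
    using assms(1,3,4) by (simp add: prod.If_cases Int_absorb1 subset_Diff_insert)
  finally show ?thesis .
qed

lemma card_sym_diff:
  assumes "finite A" and "finite B"
  shows "card (sym_diff A B) + 2 * card (A \<inter> B) = card A + card B"
proof -
  have "card (sym_diff A B) = card (A - B) + card (B - A)"
    using assms by (intro card_Un_disjoint) auto
  moreover have "card A = card (A \<inter> B) + card (A - B)" and "card B = card (B \<inter> A) + card (B - A)"
    using assms by (simp_all add: card_Int_Diff)
  ultimately show ?thesis
    by (simp add: Int_commute)
qed

lemma transpose_doubletons_apply:
  assumes "u \<noteq> a" and "u \<noteq> b" and "a \<noteq> b"
  shows "Transposition.transpose {u, a} {u, b} {u, a} = {u, b}"
    and "Transposition.transpose {u, a} {u, b} {u, b} = {u, a}"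
    and "x \<notin> {a, b} \<Longrightarrow> Transposition.transpose {u, a} {u, b} {u, x} = {u, x}"
    and "u \<notin> {x, y} \<Longrightarrow> Transposition.transpose {u, a} {u, b} {x, y} = {x, y}"
  using assms by (auto simp: Transposition.transpose_def doubleton_eq_iff)

lemma card_insert_Un_images_le:
  assumes "finite X" and "finite Y"
  shows "card (insert e (f ` X \<union> g ` Y \<union> k ` Y)) \<le> Suc (card X + 2 * card Y)"
proof -
  have "card (insert e (f ` X \<union> g ` Y \<union> k ` Y)) \<le> Suc (card (f ` X) + card (g ` Y) + card (k ` Y))"
    using assms
    by (simp add: card_insert_if) (meson card_Un_le add_le_mono order_trans le_refl le_SucI)
  also have "\<dots> \<le> Suc (card X + 2 * card Y)"
    using card_image_le[OF assms(1), of f] card_image_le[OF assms(2), of g]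
      card_image_le[OF assms(2), of k]
    by simp
  finally show ?thesis .
qed

section \<open>The configuration space\<close>

type_synonym config = "(nat set \<Rightarrow> bool) \<times> (nat list \<Rightarrow> nat)"

locale planted_tree_model =
  fixes D h n :: nat and lam :: real
  assumes D_ge_2: "D \<ge> 2" and h_pos: "h \<ge> 1"
    and edge_prob_nonneg: "0 \<le> lam / n" and edge_prob_le_1: "lam / n \<le> 1"
    and tree_fits: "dary_size D h \<le> n"
begin

abbreviation "V \<equiv> dary_vertices D h"
abbreviation "q \<equiv> lam / real n"

definition injections :: "(nat list \<Rightarrow> nat) set" where
  "injections = {\<sigma> \<in> V \<rightarrow>\<^sub>E {..<n}. inj_on \<sigma> V}"

definition noise_pmf :: "(nat set \<Rightarrow> bool) pmf" where
  "noise_pmf = Pi_pmf (all_edges n) False (\<lambda>_. bernoulli_pmf q)"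

definition config_pmf :: "config pmf" where
  "config_pmf = pair_pmf noise_pmf (pmf_of_set injections)"

definition graph_of :: "config \<Rightarrow> nat set set" where
  "graph_of = (\<lambda>(f, \<sigma>). {e \<in> all_edges n. f e} \<union> (\<lambda>e. \<sigma> ` e) ` dary_edges D h)"

definition planted_of :: "config \<Rightarrow> nat set" where
  "planted_of = (\<lambda>(f, \<sigma>). \<sigma> ` V)"

abbreviation expect :: "(config \<Rightarrow> real) \<Rightarrow> real" where
  "expect \<equiv> measure_pmf.expectation config_pmf"

lemma finite_injections: "finite injections"
  unfolding injections_def
  by (rule finite_subset[of _ "V \<rightarrow>\<^sub>E {..<n}"]) (auto intro: finite_PiE finite_dary_vertices)

lemma injections_nonempty: "injections \<noteq> {}"
proof -
  have "card V \<le> card {..<n}"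
    using tree_fits card_dary_vertices[OF D_ge_2] by simp
  then obtain \<sigma> where "\<sigma> ` V \<subseteq> {..<n}" and "inj_on \<sigma> V"
    using card_le_inj[OF finite_dary_vertices finite_lessThan] by blast
  then have "restrict \<sigma> V \<in> injections"
    unfolding injections_def by (auto simp: inj_on_def)
  then show ?thesis
    by blast
qed

lemma set_pmf_injections [simp]: "set_pmf (pmf_of_set injections) = injections"
  using finite_injections injections_nonempty by simp

lemma card_planted_of:
  assumes "\<sigma> \<in> injections"
  shows "card (planted_of (f, \<sigma>)) = dary_size D h"
  using assms card_dary_vertices[OF D_ge_2]
  unfolding injections_def planted_of_def by (auto simp: card_image)

lemma finite_planted_of: "finite (planted_of \<omega>)"
  using finite_dary_vertices by (simp add: planted_of_def split: prod.splits)

lemma finite_set_noise_pmf: "finite (set_pmf noise_pmf)"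
  unfolding noise_pmf_def using finite_all_edges
  by (auto simp: set_Pi_pmf intro: finite_subset[OF _ finite_PiE_dflt[of _ _ "\<lambda>_. UNIV"]])

lemma finite_set_config_pmf: "finite (set_pmf config_pmf)"
  unfolding config_pmf_def using finite_set_noise_pmf finite_injections by simp

lemma integrable_config_pmf [simp]:
  fixes g :: "config \<Rightarrow> real"
  shows "integrable config_pmf g"
  by (rule integrable_measure_pmf_finite[OF finite_set_config_pmf])

lemma planted_model_eq_map_config_pmf:
  "planted_model D lam h n = map_pmf (\<lambda>\<omega>. (graph_of \<omega>, planted_of \<omega>)) config_pmf"
  unfolding planted_model_def erdos_renyi_def random_injection_def config_pmf_def pair_pmf_def
    noise_pmf_def injections_def graph_of_def planted_of_def
  by (simp add: bind_map_pmf map_bind_pmf)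

lemma overlap_eq_expectation:
  assumes "estimator n (dary_size D h) est"
  shows "overlap D lam h n est = expect (\<lambda>\<omega>. real (card (est (graph_of \<omega>) \<inter> planted_of \<omega>)))"
proof -
  have "overlap D lam h n est
      = (\<Sum>i<n. measure_pmf.prob config_pmf {\<omega>. i \<in> est (graph_of \<omega>) \<inter> planted_of \<omega>})"
    unfolding overlap_def planted_model_eq_map_config_pmf measure_map_pmf
    by (intro sum.cong refl arg_cong[where f = "measure_pmf.prob _"]) auto
  also have "\<dots> = (\<Sum>i<n. expect (\<lambda>\<omega>. indicator (est (graph_of \<omega>) \<inter> planted_of \<omega>) i))"
  proof -
    have pointwise: "(\<lambda>\<omega>. indicator (X \<omega>) i :: real) = indicator {\<omega>. i \<in> X \<omega>}"
      for i and X :: "config \<Rightarrow> nat set"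
      by (auto simp: indicator_def)
    have "expect (indicator A) = measure_pmf.prob config_pmf A" for A
      by simp
    then show ?thesis
      by (simp only: pointwise)
  qed
  also have "\<dots> = expect (\<lambda>\<omega>. \<Sum>i<n. indicator (est (graph_of \<omega>) \<inter> planted_of \<omega>) i)"
    by (rule Bochner_Integration.integral_sum[symmetric]) simp
  also have "\<dots> = expect (\<lambda>\<omega>. real (card (est (graph_of \<omega>) \<inter> planted_of \<omega>)))"
  proof -
    have "(\<Sum>i<n. indicator X i :: real) = real (card X)" if "X \<subseteq> {..<n}" for X
      using that by (simp add: indicator_def Int_absorb1)
    moreover have "est G \<inter> S \<subseteq> {..<n}" for G S
      using assms unfolding estimator_def by auto
    ultimately show ?thesis
      by simp
  qed
  finally show ?thesis .
qed

section \<open>The leaf swap\<close>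

definition leaf_parents :: "nat list set" where
  "leaf_parents = {p. length p = h - 1 \<and> set p \<subseteq> {..<D}}"

lemma finite_leaf_parents: "finite leaf_parents"
  unfolding leaf_parents_def using finite_lists_length_eq[of "{..<D}" "h - 1"]
  by (simp add: conj_commute)

lemma card_leaf_parents: "card leaf_parents = D ^ (h - 1)"
  unfolding leaf_parents_def using card_lists_length_eq[of "{..<D}" "h - 1"]
  by (simp add: conj_commute)

lemma leaf_parentD:
  assumes "p \<in> leaf_parents"
  shows "p \<in> V" and "p @ [0] \<in> V" and "length p + 1 = h" and "{p, p @ [0]} \<in> dary_edges D h"
  using assms h_pos D_ge_2 unfolding leaf_parents_def dary_vertices_def dary_edges_def
  by (auto intro!: exI[of _ p] exI[of _ 0])

definition swappable :: "nat list \<Rightarrow> nat \<Rightarrow> nat \<Rightarrow> config \<Rightarrow> bool" where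
  "swappable p a b = (\<lambda>(f, \<sigma>). \<sigma> \<in> injections \<and> \<sigma> (p @ [0]) = a \<and> b < n \<and> b \<notin> \<sigma> ` V
     \<and> f {\<sigma> p, b} \<and> \<not> f {\<sigma> p, a}
     \<and> (\<forall>x<n. x \<notin> \<sigma> ` V \<longrightarrow> x \<noteq> b \<longrightarrow> \<not> f {\<sigma> p, x})
     \<and> (\<forall>y\<in>\<sigma> ` V. y \<noteq> \<sigma> p \<longrightarrow> y \<noteq> a \<longrightarrow> \<not> f {a, y} \<and> \<not> f {b, y}))"

(* Symmetric in a and b, so that it is an involution on all configurations. *)
definition swap_leaf :: "nat list \<Rightarrow> nat \<Rightarrow> nat \<Rightarrow> config \<Rightarrow> config" where
  "swap_leaf p a b = (\<lambda>(f, \<sigma>).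
     if swappable p a b (f, \<sigma>) \<or> swappable p b a (f, \<sigma>)
     then (f \<circ> Transposition.transpose {\<sigma> p, a} {\<sigma> p, b},
           \<sigma>(p @ [0] := Transposition.transpose a b (\<sigma> (p @ [0]))))
     else (f, \<sigma>))"

lemma swap_leaf_commute: "swap_leaf p a b = swap_leaf p b a"
  unfolding swap_leaf_def by (auto simp: fun_eq_iff transpose_commute)

lemma swap_leaf_eq:
  assumes "swappable p a b (f, \<sigma>)"
  shows "swap_leaf p a b (f, \<sigma>) = (f \<circ> Transposition.transpose {\<sigma> p, a} {\<sigma> p, b}, \<sigma>(p @ [0] := b))"
  using assms unfolding swap_leaf_def by (auto simp: swappable_def)

lemma swap_leaf_not_swappable:
  assumes "\<not> swappable p a b \<omega>" and "\<not> swappable p b a \<omega>"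
  shows "swap_leaf p a b \<omega> = \<omega>"
  using assms unfolding swap_leaf_def by (auto split: prod.splits)

context
  fixes p :: "nat list"
  assumes p: "p \<in> leaf_parents"
begin

lemma swappableD:
  assumes "swappable p a b (f, \<sigma>)"
  shows "\<sigma> \<in> injections" and "\<sigma> (p @ [0]) = a" and "a \<in> \<sigma> ` V" and "b \<notin> \<sigma> ` V" and "a \<noteq> b"
    and "\<sigma> p \<noteq> a" and "\<sigma> p \<noteq> b" and "{\<sigma> p, a} \<in> all_edges n" and "{\<sigma> p, b} \<in> all_edges n"
    and "a < n" and "b < n"
proof -
  show inj: "\<sigma> \<in> injections" and a: "\<sigma> (p @ [0]) = a" and b: "b \<notin> \<sigma> ` V"
    using assms unfolding swappable_def by auto
  show aV: "a \<in> \<sigma> ` V"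
    using a leaf_parentD(2)[OF p] by blast
  then show "a \<noteq> b"
    using b by blast
  show "\<sigma> p \<noteq> a"
    using inj a leaf_parentD(1,2)[OF p] unfolding injections_def by (auto dest: inj_onD)
  moreover show "\<sigma> p \<noteq> b"
    using b leaf_parentD(1)[OF p] by blast
  moreover show "a < n" and "b < n"
    using inj aV assms unfolding injections_def swappable_def by auto
  moreover have "\<sigma> p < n"
    using inj leaf_parentD(1)[OF p] unfolding injections_def by auto
  ultimately show "{\<sigma> p, a} \<in> all_edges n" and "{\<sigma> p, b} \<in> all_edges n"
    unfolding all_edges_def by blast+
qed

lemma image_update_leaf:
  assumes "\<sigma> \<in> injections"
  shows "\<sigma>(p @ [0] := b) ` V = insert b (\<sigma> ` V - {\<sigma> (p @ [0])})"
proof -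
  have "\<sigma> ` (V - {p @ [0]}) = \<sigma> ` V - {\<sigma> (p @ [0])}"
    using assms leaf_parentD(2)[OF p] unfolding injections_def by (auto dest: inj_onD)
  then show ?thesis
    using leaf_parentD(2)[OF p] by (metis fun_upd_image)
qed

lemma update_leaf_in_injections:
  assumes "\<sigma> \<in> injections" and "b < n" and "b \<notin> \<sigma> ` V"
  shows "\<sigma>(p @ [0] := b) \<in> injections"
  using assms leaf_parentD(2)[OF p] unfolding injections_def
  by (auto intro!: inj_on_fun_updI simp: PiE_def extensional_def)

lemma image_dary_edges_update_leaf:
  "(\<lambda>e. \<sigma>(p @ [0] := b) ` e) ` dary_edges D h
    = insert {\<sigma> p, b} ((\<lambda>e. \<sigma> ` e) ` (dary_edges D h - {{p, p @ [0]}}))"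
proof -
  have "\<sigma>(p @ [0] := b) ` e = \<sigma> ` e" if "e \<in> dary_edges D h - {{p, p @ [0]}}" for e
  proof -
    have "p @ [0] \<notin> e"
      using that dary_edge_at_leaf leaf_parentD(3)[OF p] by blast
    then show ?thesis
      by (auto intro: image_cong)
  qed
  moreover have "\<sigma>(p @ [0] := b) ` {p, p @ [0]} = {\<sigma> p, b}"
    by simp
  ultimately show ?thesis
    using leaf_parentD(4)[OF p] by (metis (no_types, lifting) image_cong image_insert insert_Diff)
qed

lemma swappable_swap_leaf:
  assumes "swappable p a b \<omega>"
  shows "swappable p b a (swap_leaf p a b \<omega>)"
proof -
  obtain f \<sigma> where \<omega>: "\<omega> = (f, \<sigma>)"
    by fastforce
  note facts = swappableD[OF assms[unfolded \<omega>]]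
  define u where "u = \<sigma> p"
  define f' where "f' = f \<circ> Transposition.transpose {u, a} {u, b}"
  define \<sigma>' where "\<sigma>' = \<sigma>(p @ [0] := b)"
  have hyps: "f {u, b}" "\<not> f {u, a}"
     "\<And>x. x < n \<Longrightarrow> x \<notin> \<sigma> ` V \<Longrightarrow> x \<noteq> b \<Longrightarrow> \<not> f {u, x}"
     "\<And>y. y \<in> \<sigma> ` V \<Longrightarrow> y \<noteq> u \<Longrightarrow> y \<noteq> a \<Longrightarrow> \<not> f {a, y} \<and> \<not> f {b, y}"
    using assms unfolding \<omega> swappable_def u_def by auto
  have "u \<noteq> a" "u \<noteq> b" "a \<noteq> b"
    using facts unfolding u_def by auto
  then have f'_apply: "f' {u, a} = f {u, b}" "f' {u, b} = f {u, a}"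
    "x \<notin> {a, b} \<Longrightarrow> f' {u, x} = f {u, x}" "u \<notin> {x, y} \<Longrightarrow> f' {x, y} = f {x, y}" for x y
    by (simp_all add: f'_def transpose_doubletons_apply)
  have u: "\<sigma>' p = u"
    by (simp add: \<sigma>'_def u_def)
  have img: "\<sigma>' ` V = insert b (\<sigma> ` V - {a})"
    using image_update_leaf[OF facts(1)] facts(2) by (simp add: \<sigma>'_def)
  have "swappable p b a (f', \<sigma>')"
    unfolding swappable_def prod.case u
  proof (intro conjI ballI allI impI)
    show "\<sigma>' \<in> injections"
      unfolding \<sigma>'_def using facts(1,11,4) by (rule update_leaf_in_injections)
    show "\<sigma>' (p @ [0]) = b"
      by (simp add: \<sigma>'_def)
    show "a < n"
      by (fact facts(10))
    show "a \<notin> \<sigma>' ` V"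
      using img \<open>a \<noteq> b\<close> by blast
    show "f' {u, a}" "\<not> f' {u, b}"
      using hyps(1,2) f'_apply(1,2) by simp_all
  next
    fix x assume "x < n" "x \<notin> \<sigma>' ` V" "x \<noteq> a"
    then show "\<not> f' {u, x}"
      using img hyps(3) f'_apply(3) by auto
  next
    fix y assume "y \<in> \<sigma>' ` V" "y \<noteq> u" "y \<noteq> b"
    then show "\<not> f' {b, y}" "\<not> f' {a, y}"
      using img hyps(4)[of y] f'_apply(4) \<open>u \<noteq> a\<close> \<open>u \<noteq> b\<close> by auto
  qed
  then show ?thesis
    using swap_leaf_eq assms unfolding \<omega> f'_def \<sigma>'_def u_def by simp
qed

lemma swap_leaf_involutory: "swap_leaf p a b (swap_leaf p a b \<omega>) = \<omega>"
proof -
  have undo: "swap_leaf p b a (swap_leaf p a b \<omega>) = \<omega>" if "swappable p a b \<omega>" for a b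
  proof -
    obtain f \<sigma> where \<omega>: "\<omega> = (f, \<sigma>)"
      by fastforce
    note swap = swap_leaf_eq[OF that[unfolded \<omega>]]
    have "swappable p b a (f \<circ> Transposition.transpose {\<sigma> p, a} {\<sigma> p, b}, \<sigma>(p @ [0] := b))"
      using swappable_swap_leaf[OF that] by (simp add: \<omega> swap)
    from swap_leaf_eq[OF this] show ?thesis
      using swappableD(2)[OF that[unfolded \<omega>]]
      by (simp add: \<omega> swap fun_eq_iff transpose_commute[of "{\<sigma> p, b}"])
  qed
  show ?thesis
    using undo[of a b] undo[of b a] swap_leaf_not_swappable[of p a b \<omega>]
      swap_leaf_commute[of p a b]
    by (cases "swappable p a b \<omega> \<or> swappable p b a \<omega>") auto
qed

lemma swappable_swap_leaf_iff: "swappable p b a (swap_leaf p a b \<omega>) \<longleftrightarrow> swappable p a b \<omega>"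
  using swappable_swap_leaf[of a b \<omega>] swappable_swap_leaf[of b a "swap_leaf p a b \<omega>"]
  by (metis swap_leaf_commute swap_leaf_involutory)

lemma pmf_noise_comp_transpose:
  assumes "e1 \<in> all_edges n" and "e2 \<in> all_edges n"
  shows "pmf noise_pmf (f \<circ> Transposition.transpose e1 e2) = pmf noise_pmf f"
proof -
  let ?t = "Transposition.transpose e1 e2"
  have "noise_pmf = map_pmf (\<lambda>g. g \<circ> ?t) noise_pmf"
    unfolding noise_pmf_def using assms finite_all_edges
    by (intro Pi_pmf_bij_betw) (auto simp: Transposition.transpose_def)
  moreover have "inj (\<lambda>g. g \<circ> ?t)"
    by (rule injI) (metis comp_assoc transpose_comp_involutory comp_id)
  ultimately show ?thesis
    by (metis pmf_map_inj')
qed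

lemma pmf_config_swap_leaf: "pmf config_pmf (swap_leaf p a b \<omega>) = pmf config_pmf \<omega>"
proof -
  have invariant: "pmf config_pmf (swap_leaf p a b \<omega>) = pmf config_pmf \<omega>"
    if "swappable p a b \<omega>" for a b
  proof -
    obtain f \<sigma> where \<omega>: "\<omega> = (f, \<sigma>)"
      by fastforce
    note facts = swappableD[OF that[unfolded \<omega>]]
    note swap = swap_leaf_eq[OF that[unfolded \<omega>]]
    have "swappable p b a (f \<circ> Transposition.transpose {\<sigma> p, a} {\<sigma> p, b}, \<sigma>(p @ [0] := b))"
      using swappable_swap_leaf[OF that] by (simp add: \<omega> swap)
    then have "\<sigma>(p @ [0] := b) \<in> injections"
      by (rule swappableD(1))
    then show ?thesis
      using facts(1)
      by (simp add: \<omega> swap config_pmf_def pmf_pair pmf_noise_comp_transpose[OF facts(8,9)]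
          finite_injections injections_nonempty)
  qed
  show ?thesis
    using invariant[of a b] invariant[of b a] swap_leaf_not_swappable[of p a b \<omega>]
      swap_leaf_commute[of p a b]
    by (cases "swappable p a b \<omega> \<or> swappable p b a \<omega>") auto
qed

lemma map_pmf_swap_leaf: "map_pmf (swap_leaf p a b) config_pmf = config_pmf"
  by (intro map_pmf_involution swap_leaf_involutory pmf_config_swap_leaf)

lemma planted_of_swap_leaf:
  assumes "swappable p a b \<omega>"
  shows "planted_of (swap_leaf p a b \<omega>) = insert b (planted_of \<omega> - {a})"
proof -
  obtain f \<sigma> where \<omega>: "\<omega> = (f, \<sigma>)"
    by fastforce
  show ?thesis
    using swappableD(1,2)[OF assms[unfolded \<omega>]] image_update_leaf
    by (simp add: \<omega> swap_leaf_eq[OF assms[unfolded \<omega>]] planted_of_def)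
qed

lemma graph_of_swap_leaf:
  assumes "swappable p a b \<omega>"
  shows "graph_of (swap_leaf p a b \<omega>) = graph_of \<omega>"
proof -
  obtain f \<sigma> where \<omega>: "\<omega> = (f, \<sigma>)"
    by fastforce
  note facts = swappableD[OF assms[unfolded \<omega>]]
  define u where "u = \<sigma> p"
  define w where "w = p @ [0]"
  define f' where "f' = f \<circ> Transposition.transpose {u, a} {u, b}"
  define \<sigma>' where "\<sigma>' = \<sigma>(w := b)"
  define R where "R = (\<lambda>e. \<sigma> ` e) ` (dary_edges D h - {{p, w}})"
  have tree: "(\<lambda>e. \<sigma> ` e) ` dary_edges D h = insert {u, a} R"
    "(\<lambda>e. \<sigma>' ` e) ` dary_edges D h = insert {u, b} R"
    using image_dary_edges_update_leaf[of \<sigma> "\<sigma> (p @ [0])", unfolded fun_upd_triv, unfolded facts(2)]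
      image_dary_edges_update_leaf[of \<sigma> b]
    unfolding R_def u_def w_def \<sigma>'_def by simp_all
  have "f {u, b}" and "\<not> f {u, a}"
    using assms unfolding \<omega> swappable_def u_def by auto
  then have noise: "{e \<in> all_edges n. f' e} = insert {u, a} ({e \<in> all_edges n. f e} - {{u, b}})"
    using facts(6,7,8) unfolding f'_def u_def
    by (auto simp: Transposition.transpose_def doubleton_eq_iff)
  have "{u, b} \<in> {e \<in> all_edges n. f e}"
    using facts(9) \<open>f {u, b}\<close> unfolding u_def by simp
  moreover have swap: "swap_leaf p a b \<omega> = (f', \<sigma>')"
    using swap_leaf_eq[OF assms[unfolded \<omega>]] by (simp add: \<omega> f'_def \<sigma>'_def u_def w_def)
  ultimately show ?thesis
    unfolding swap unfolding \<omega> graph_of_def prod.case tree noise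
    by blast
qed

end

lemma swappable_disjoint:
  assumes p: "p \<in> leaf_parents" and p': "p' \<in> leaf_parents"
    and sw: "swappable p a b \<omega>" and sw': "swappable p' a' b' \<omega>" and ne: "(p, a, b) \<noteq> (p', a', b')"
  shows "{a, b} \<inter> {a', b'} = {}"
proof -
  obtain f \<sigma> where \<omega>: "\<omega> = (f, \<sigma>)"
    by fastforce
  note facts = swappableD[OF p sw[unfolded \<omega>]] and facts' = swappableD[OF p' sw'[unfolded \<omega>]]
  have inj: "inj_on \<sigma> V"
    using facts(1) unfolding injections_def by simp
  have hyps: "f {\<sigma> p, b}" "\<And>x. x < n \<Longrightarrow> x \<notin> \<sigma> ` V \<Longrightarrow> x \<noteq> b \<Longrightarrow> \<not> f {\<sigma> p, x}"
    "\<And>y. y \<in> \<sigma> ` V \<Longrightarrow> y \<noteq> \<sigma> p \<Longrightarrow> y \<noteq> a \<Longrightarrow> \<not> f {b, y}" "f {\<sigma> p', b'}"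
    using sw sw' unfolding \<omega> swappable_def by auto
  have "a \<noteq> b'" and "b \<noteq> a'"
    using facts(3,4) facts'(3,4) by auto
  moreover have "a \<noteq> a' \<and> b \<noteq> b'"
  proof (cases "p = p'")
    case True
    then have "a = a'"
      using facts(2) facts'(2) by simp
    with ne True have "b \<noteq> b'"
      by simp
    then show ?thesis
      using hyps(2,4) facts'(4,11) True by auto
  next
    case False
    moreover have "p' \<noteq> p @ [0]"
      using leaf_parentD(3)[OF p] leaf_parentD(3)[OF p'] by auto
    ultimately have "\<sigma> (p @ [0]) \<noteq> \<sigma> (p' @ [0])" and "\<sigma> p' \<noteq> \<sigma> p" and "\<sigma> p' \<noteq> \<sigma> (p @ [0])"
      using leaf_parentD(1,2)[OF p] leaf_parentD(1,2)[OF p'] by (simp_all add: inj_on_contraD[OF inj])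
    moreover have "\<not> f {b, \<sigma> p'}" if "\<sigma> p' \<noteq> \<sigma> p" and "\<sigma> p' \<noteq> a"
      using hyps(3) that leaf_parentD(1)[OF p'] by blast
    ultimately show ?thesis
      using facts(2) facts'(2) hyps(4) by (metis insert_commute)
  qed
  ultimately show ?thesis
    by auto
qed

section \<open>Misclassified vertices\<close>

definition misplaced :: "(nat set set \<Rightarrow> nat set) \<Rightarrow> config \<Rightarrow> nat set" where
  "misplaced est \<omega> = sym_diff (planted_of \<omega>) (est (graph_of \<omega>))"

definition swap_errors :: "(nat set set \<Rightarrow> nat set) \<Rightarrow> nat list \<Rightarrow> nat \<Rightarrow> nat \<Rightarrow> config \<Rightarrow> real" where
  "swap_errors est p a b \<omega> =
    (if swappable p a b \<omega> then real (card ({a, b} \<inter> misplaced est \<omega>)) else 0)"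

lemma misplaced_swap_leaf:
  assumes "p \<in> leaf_parents" and "swappable p a b \<omega>"
  shows "{a, b} \<inter> misplaced est (swap_leaf p a b \<omega>) = {a, b} - misplaced est \<omega>"
proof -
  obtain f \<sigma> where \<omega>: "\<omega> = (f, \<sigma>)"
    by fastforce
  have "a \<in> planted_of \<omega>" and "b \<notin> planted_of \<omega>"
    using swappableD(3,4)[OF assms(1) assms(2)[unfolded \<omega>]] by (simp_all add: \<omega> planted_of_def)
  then show ?thesis
    unfolding misplaced_def graph_of_swap_leaf[OF assms] planted_of_swap_leaf[OF assms] by auto
qed

lemma swap_errors_add_swap_leaf:
  assumes "p \<in> leaf_parents"
  shows "swap_errors est p a b \<omega> + swap_errors est p b a (swap_leaf p a b \<omega>)
    = 2 * indicator {\<omega>. swappable p a b \<omega>} \<omega>"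
proof (cases "swappable p a b \<omega>")
  case True
  obtain f \<sigma> where \<omega>: "\<omega> = (f, \<sigma>)"
    by fastforce
  have "a \<noteq> b"
    using swappableD(5)[OF assms True[unfolded \<omega>]] .
  then have "card ({a, b} \<inter> misplaced est \<omega>) + card ({a, b} - misplaced est \<omega>) = 2"
    by (simp add: card_Int_Diff[symmetric])
  then show ?thesis
    using True misplaced_swap_leaf[OF assms True] swappable_swap_leaf_iff[OF assms]
    unfolding swap_errors_def by (simp add: insert_commute flip: of_nat_add)
next
  case False
  then show ?thesis
    using swappable_swap_leaf_iff[OF assms] unfolding swap_errors_def by simp
qed

lemma expectation_swap_errors_pair:
  assumes "p \<in> leaf_parents"
  shows "expect (swap_errors est p a b) + expect (swap_errors est p b a)
    = 2 * measure_pmf.prob config_pmf {\<omega>. swappable p a b \<omega>}"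
proof -
  have "expect (swap_errors est p b a) = expect (\<lambda>\<omega>. swap_errors est p b a (swap_leaf p a b \<omega>))"
    by (metis integral_map_pmf map_pmf_swap_leaf[OF assms])
  then have "expect (swap_errors est p a b) + expect (swap_errors est p b a)
      = expect (\<lambda>\<omega>. swap_errors est p a b \<omega> + swap_errors est p b a (swap_leaf p a b \<omega>))"
    by simp
  also have "\<dots> = expect (\<lambda>\<omega>. 2 * indicator {\<omega>. swappable p a b \<omega>} \<omega>)"
    by (simp only: swap_errors_add_swap_leaf[OF assms])
  finally show ?thesis
    by simp
qed

definition candidate_swaps :: "(nat list \<times> nat \<times> nat) set" where
  "candidate_swaps = leaf_parents \<times> {..<n} \<times> {..<n}"

lemma finite_candidate_swaps: "finite candidate_swaps"
  unfolding candidate_swaps_def using finite_leaf_parents by simp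

lemma finite_estimate:
  assumes "estimator n (dary_size D h) est"
  shows "finite (est G)"
  using assms unfolding estimator_def by (meson finite_lessThan finite_subset)

lemma finite_misplaced:
  assumes "estimator n (dary_size D h) est"
  shows "finite (misplaced est \<omega>)"
  using finite_planted_of finite_estimate[OF assms] unfolding misplaced_def by simp

lemma sum_swap_errors_le_card_misplaced:
  assumes "estimator n (dary_size D h) est"
  shows "(\<Sum>(p, a, b)\<in>candidate_swaps. swap_errors est p a b \<omega>) \<le> real (card (misplaced est \<omega>))"
proof -
  define S where "S = {(p, a, b) \<in> candidate_swaps. swappable p a b \<omega>}"
  define P where "P = (\<lambda>(p :: nat list, a, b). {a, b} \<inter> misplaced est \<omega>)"
  have "(\<Sum>(p, a, b)\<in>candidate_swaps. swap_errors est p a b \<omega>) = (\<Sum>j\<in>S. real (card (P j)))"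
    unfolding S_def P_def swap_errors_def
    by (rule sum.mono_neutral_cong_right) (auto simp: finite_candidate_swaps split: if_splits)
  also have "(\<Sum>j\<in>S. real (card (P j))) = real (card (\<Union>j\<in>S. P j))"
  proof -
    have "finite S"
      unfolding S_def by (rule finite_subset[OF _ finite_candidate_swaps]) auto
    moreover have "P i \<inter> P j = {}" if "i \<in> S" "j \<in> S" "i \<noteq> j" for i j
      using that swappable_disjoint unfolding S_def P_def candidate_swaps_def by fastforce
    ultimately show ?thesis
      unfolding of_nat_sum[symmetric] by (subst card_UN_disjoint) (auto simp: P_def)
  qed
  also have "card (\<Union>j\<in>S. P j) \<le> card (misplaced est \<omega>)"
    using finite_misplaced[OF assms] by (intro card_mono) (auto simp: P_def)
  finally show ?thesis
    by simp
qed

lemma sum_expectation_swap_errors: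
  "(\<Sum>(p, a, b)\<in>candidate_swaps. expect (swap_errors est p a b))
    = (\<Sum>(p, a, b)\<in>candidate_swaps. measure_pmf.prob config_pmf {\<omega>. swappable p a b \<omega>})"
proof -
  let ?flip = "\<lambda>(p :: nat list, a :: nat, b :: nat). (p, b, a)"
  have "(\<Sum>(p, a, b)\<in>candidate_swaps. expect (swap_errors est p b a))
      = (\<Sum>(p, a, b)\<in>candidate_swaps. expect (swap_errors est p a b))"
    by (rule sum.reindex_bij_witness[of _ ?flip ?flip]) (auto simp: candidate_swaps_def)
  moreover have "(\<Sum>(p, a, b)\<in>candidate_swaps.
        expect (swap_errors est p a b) + expect (swap_errors est p b a))
      = (\<Sum>(p, a, b)\<in>candidate_swaps. 2 * measure_pmf.prob config_pmf {\<omega>. swappable p a b \<omega>})"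
    by (rule sum.cong) (auto simp: candidate_swaps_def expectation_swap_errors_pair)
  ultimately show ?thesis
    by (simp add: sum.distrib case_prod_beta sum_distrib_left[symmetric])
qed

lemma card_misplaced:
  assumes est: "estimator n (dary_size D h) est" and "\<omega> \<in> set_pmf config_pmf"
  shows "real (card (misplaced est \<omega>))
    = 2 * real (dary_size D h) - 2 * real (card (est (graph_of \<omega>) \<inter> planted_of \<omega>))"
proof -
  obtain f \<sigma> where \<omega>: "\<omega> = (f, \<sigma>)"
    by fastforce
  with assms(2) have "\<sigma> \<in> injections"
    unfolding config_pmf_def by simp
  then have "card (planted_of \<omega>) = dary_size D h"
    by (simp add: \<omega> card_planted_of)
  moreover have "card (est (graph_of \<omega>)) = dary_size D h"
    using est unfolding estimator_def by simp
  ultimately have "card (misplaced est \<omega>) + 2 * card (planted_of \<omega> \<inter> est (graph_of \<omega>))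
      = dary_size D h + dary_size D h"
    using card_sym_diff[OF finite_planted_of finite_estimate[OF est]] unfolding misplaced_def
    by simp
  then show ?thesis
    by (simp add: Int_commute flip: of_nat_add of_nat_mult)
qed

lemma overlap_le_sum_prob_swappable:
  assumes est: "estimator n (dary_size D h) est"
  shows "overlap D lam h n est \<le> real (dary_size D h)
    - (\<Sum>(p, a, b)\<in>candidate_swaps. measure_pmf.prob config_pmf {\<omega>. swappable p a b \<omega>}) / 2"
proof -
  have "(\<Sum>(p, a, b)\<in>candidate_swaps. measure_pmf.prob config_pmf {\<omega>. swappable p a b \<omega>})
      = expect (\<lambda>\<omega>. \<Sum>(p, a, b)\<in>candidate_swaps. swap_errors est p a b \<omega>)"
    unfolding sum_expectation_swap_errors[of est, symmetric]
    by (subst Bochner_Integration.integral_sum) (simp_all add: case_prod_beta)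
  also have "\<dots> \<le> expect (\<lambda>\<omega>. real (card (misplaced est \<omega>)))"
    by (intro integral_mono sum_swap_errors_le_card_misplaced[OF est]) simp_all
  also have "\<dots> = expect (\<lambda>\<omega>.
      2 * real (dary_size D h) - 2 * real (card (est (graph_of \<omega>) \<inter> planted_of \<omega>)))"
    by (intro integral_cong_AE AE_pmfI card_misplaced[OF est]) simp_all
  also have "\<dots> = 2 * real (dary_size D h) - 2 * overlap D lam h n est"
    by (simp add: overlap_eq_expectation[OF est])
  finally show ?thesis
    by simp
qed

section \<open>Swappable configurations are likely\<close>

lemma prob_noise_swappable_ge:
  assumes p: "p \<in> leaf_parents" and \<sigma>: "\<sigma> \<in> injections" and b: "b < n" "b \<notin> \<sigma> ` V"
  shows "q * (1 - q) ^ (3 * n + 1) \<le> measure_pmf.prob noise_pmf {f. swappable p (\<sigma> (p @ [0])) b (f, \<sigma>)}"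
proof -
  define u where "u = \<sigma> p"
  define a where "a = \<sigma> (p @ [0])"
  define K where "K = \<sigma> ` V"
  define outside where "outside = {..<n} - K - {b}"
  define absent where "absent = insert {u, a} ((\<lambda>x. {u, x}) ` outside
    \<union> (\<lambda>y. {a, y}) ` (K - {u, a}) \<union> (\<lambda>y. {b, y}) ` (K - {u, a}))"
  have K: "K \<subseteq> {..<n}" "u \<in> K" "a \<in> K" "b \<notin> K" "card K = dary_size D h"
    using \<sigma> b(2) leaf_parentD(1,2)[OF p] card_planted_of[OF \<sigma>]
    unfolding injections_def K_def u_def a_def planted_of_def by auto
  have "u \<noteq> a"
    using \<sigma> leaf_parentD(1,2)[OF p] unfolding injections_def u_def a_def by (auto dest: inj_onD)
  then have absent: "absent \<subseteq> all_edges n" "{u, b} \<in> all_edges n" "{u, b} \<notin> absent"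
    using K b(1) unfolding absent_def outside_def all_edges_def by (auto simp: doubleton_eq_iff)
  have "finite K"
    using K(1) finite_subset by blast
  then have "card absent \<le> Suc (card outside + 2 * card (K - {u, a}))"
    unfolding absent_def outside_def by (intro card_insert_Un_images_le) auto
  moreover have "card outside \<le> n"
    unfolding outside_def by (metis Diff_subset card_lessThan card_mono finite_lessThan order_trans)
  moreover have "card (K - {u, a}) \<le> n"
    using K(5) tree_fits \<open>finite K\<close> by (metis Diff_subset card_mono order_trans)
  ultimately have card_absent: "card absent \<le> 3 * n + 1"
    by linarith
  have "{f. f {u, b} \<and> (\<forall>e\<in>absent. \<not> f e)} \<subseteq> {f. swappable p a b (f, \<sigma>)}"
    using \<sigma> b unfolding swappable_def absent_def outside_def K_def u_def a_def by auto
  then have "measure_pmf.prob noise_pmf {f. f {u, b} \<and> (\<forall>e\<in>absent. \<not> f e)}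
      \<le> measure_pmf.prob noise_pmf {f. swappable p a b (f, \<sigma>)}"
    by (rule measure_pmf.finite_measure_mono) simp
  moreover have "measure_pmf.prob noise_pmf {f. f {u, b} \<and> (\<forall>e\<in>absent. \<not> f e)} = q * (1 - q) ^ card absent"
    unfolding noise_pmf_def using absent finite_all_edges edge_prob_nonneg edge_prob_le_1
    by (intro prob_Pi_pmf_bernoulli_pattern) auto
  moreover have "q * (1 - q) ^ (3 * n + 1) \<le> q * (1 - q) ^ card absent"
    using card_absent edge_prob_nonneg edge_prob_le_1 by (intro mult_left_mono power_decreasing) auto
  ultimately show ?thesis
    unfolding a_def by linarith
qed

lemma sum_prob_noise_swappable_ge:
  assumes p: "p \<in> leaf_parents" and \<sigma>: "\<sigma> \<in> injections"
  shows "real (n - dary_size D h) * (q * (1 - q) ^ (3 * n + 1))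
    \<le> (\<Sum>a<n. \<Sum>b<n. measure_pmf.prob noise_pmf {f. swappable p a b (f, \<sigma>)})"
proof -
  define outside where "outside = {..<n} - \<sigma> ` V"
  have "\<sigma> (p @ [0]) < n" and "\<sigma> ` V \<subseteq> {..<n}"
    using \<sigma> leaf_parentD(2)[OF p] unfolding injections_def by auto
  have "card outside = n - dary_size D h"
    using card_planted_of[OF \<sigma>] \<open>\<sigma> ` V \<subseteq> {..<n}\<close>
    unfolding outside_def planted_of_def by (simp add: card_Diff_subset finite_dary_vertices)
  then have "real (n - dary_size D h) * (q * (1 - q) ^ (3 * n + 1))
      \<le> (\<Sum>b\<in>outside. measure_pmf.prob noise_pmf {f. swappable p (\<sigma> (p @ [0])) b (f, \<sigma>)})"
    using sum_mono[of outside "\<lambda>_. q * (1 - q) ^ (3 * n + 1)"] prob_noise_swappable_ge[OF p \<sigma>]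
    unfolding outside_def by auto
  also have "\<dots> \<le> (\<Sum>b<n. measure_pmf.prob noise_pmf {f. swappable p (\<sigma> (p @ [0])) b (f, \<sigma>)})"
    unfolding outside_def by (rule sum_mono2) auto
  also have "\<dots> \<le> (\<Sum>a<n. \<Sum>b<n. measure_pmf.prob noise_pmf {f. swappable p a b (f, \<sigma>)})"
    using \<open>\<sigma> (p @ [0]) < n\<close> by (intro member_le_sum) (auto intro: sum_nonneg)
  finally show ?thesis .
qed

lemma prob_swappable_eq_expectation:
  "measure_pmf.prob config_pmf {\<omega>. swappable p a b \<omega>}
    = measure_pmf.expectation (pmf_of_set injections)
        (\<lambda>\<sigma>. measure_pmf.prob noise_pmf {f. swappable p a b (f, \<sigma>)})"
proof -
  have "measure_pmf.prob config_pmf {\<omega>. swappable p a b \<omega>} = expect (indicator {\<omega>. swappable p a b \<omega>})"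
    by simp
  also have "\<dots> = measure_pmf.expectation (pmf_of_set injections)
      (\<lambda>\<sigma>. measure_pmf.expectation noise_pmf (\<lambda>f. indicator {\<omega>. swappable p a b \<omega>} (f, \<sigma>)))"
    unfolding config_pmf_def
    by (rule expectation_pair_pmf[OF finite_set_noise_pmf]) (simp add: finite_injections)
  also have "\<dots> = measure_pmf.expectation (pmf_of_set injections)
      (\<lambda>\<sigma>. measure_pmf.prob noise_pmf {f. swappable p a b (f, \<sigma>)})"
  proof -
    have "(\<lambda>f. indicator {\<omega>. swappable p a b \<omega>} (f, \<sigma>))
        = (indicator {f. swappable p a b (f, \<sigma>)} :: _ \<Rightarrow> real)" for \<sigma>
      by (auto simp: indicator_def)
    then show ?thesis
      by simp
  qed
  finally show ?thesis .
qed

lemma sum_prob_swappable_ge: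
  assumes p: "p \<in> leaf_parents"
  shows "real (n - dary_size D h) * (q * (1 - q) ^ (3 * n + 1))
    \<le> (\<Sum>a<n. \<Sum>b<n. measure_pmf.prob config_pmf {\<omega>. swappable p a b \<omega>})"
proof -
  let ?U = "pmf_of_set injections"
  have "real (n - dary_size D h) * (q * (1 - q) ^ (3 * n + 1))
      \<le> measure_pmf.expectation ?U
          (\<lambda>\<sigma>. \<Sum>a<n. \<Sum>b<n. measure_pmf.prob noise_pmf {f. swappable p a b (f, \<sigma>)})"
    using finite_injections injections_nonempty sum_prob_noise_swappable_ge[OF p]
    by (intro measure_pmf.integral_ge_const integrable_measure_pmf_finite AE_pmfI) auto
  also have "\<dots> = (\<Sum>a<n. \<Sum>b<n. measure_pmf.expectation ?U
      (\<lambda>\<sigma>. measure_pmf.prob noise_pmf {f. swappable p a b (f, \<sigma>)}))"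
    using finite_injections injections_nonempty
    by (simp add: Bochner_Integration.integral_sum integrable_measure_pmf_finite)
  finally show ?thesis
    by (simp only: prob_swappable_eq_expectation)
qed

lemma overlap_le:
  assumes est: "estimator n (dary_size D h) est"
  shows "overlap D lam h n est
    \<le> real (dary_size D h) * (1 - real (n - dary_size D h) * (q * (1 - q) ^ (3 * n + 1)) / (4 * real D))"
proof -
  define K where "K = real (dary_size D h)"
  define M where "M = real (n - dary_size D h) * (q * (1 - q) ^ (3 * n + 1))"
  have "M \<ge> 0"
    unfolding M_def using edge_prob_nonneg edge_prob_le_1 by (intro mult_nonneg_nonneg zero_le_power) auto
  have "K \<le> 2 * real D * real (card leaf_parents)"
  proof -
    have "D ^ h = D * D ^ (h - 1)"
      using h_pos by (metis Suc_diff_1 less_le_trans zero_less_one power_Suc)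
    then show ?thesis
      using dary_size_le[OF D_ge_2, of h] unfolding K_def card_leaf_parents
      by (metis mult.assoc of_nat_le_iff of_nat_mult of_nat_numeral)
  qed
  then have "K * M / (4 * real D) \<le> 2 * real D * real (card leaf_parents) * M / (4 * real D)"
    using \<open>M \<ge> 0\<close> by (intro divide_right_mono mult_right_mono) auto
  also have "\<dots> = real (card leaf_parents) * M / 2"
    using D_ge_2 by (simp add: field_simps)
  also have "real (card leaf_parents) * M / 2
      \<le> (\<Sum>(p, a, b)\<in>candidate_swaps. measure_pmf.prob config_pmf {\<omega>. swappable p a b \<omega>}) / 2"
    unfolding candidate_swaps_def M_def
    using sum_mono[of leaf_parents, OF sum_prob_swappable_ge]
    by (simp add: sum.cartesian_product[symmetric])
  finally have "K * M / (4 * real D)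
      \<le> (\<Sum>(p, a, b)\<in>candidate_swaps. measure_pmf.prob config_pmf {\<omega>. swappable p a b \<omega>}) / 2" .
  then show ?thesis
    using overlap_le_sum_prob_swappable[OF est] right_diff_distrib[of K 1 "M / (4 * real D)"]
    unfolding K_def[symmetric] M_def[symmetric] by simp
qed

end

lemma one_le_of_hbar_le:
  assumes "hbar D lam n \<le> enat m"
  shows "1 \<le> m"
proof (cases "\<exists>h>0. p_gw D lam h < 1 / real n")
  case True
  then have "0 < (LEAST h. h > 0 \<and> p_gw D lam h < 1 / real n)"
    by (metis (mono_tags, lifting) LeastI_ex)
  moreover have "(LEAST h. h > 0 \<and> p_gw D lam h < 1 / real n) \<le> m"
    using assms True unfolding hbar_def by simp
  ultimately show ?thesis
    by simp
next
  case False
  then have "hbar D lam n = \<infinity>"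
    unfolding hbar_def by (rule if_not_P)
  then show ?thesis
    using assms by simp
qed

lemma eventually_one_minus_power_ge:
  fixes lam :: real
  shows "\<forall>\<^sub>F n in sequentially. exp (-3 * lam) / 2 \<le> (1 - lam / real n) ^ (3 * n + 1)"
proof -
  have "(\<lambda>n. ((1 + (-lam) / real n) ^ n) ^ 3 * (1 - lam / real n)) \<longlonglongrightarrow> exp (-lam) ^ 3 * (1 - 0)"
    by (intro tendsto_intros tendsto_exp_limit_sequentially lim_const_over_n)
  moreover have "((1 + (-lam) / real n) ^ n) ^ 3 * (1 - lam / real n) = (1 - lam / real n) ^ (3 * n + 1)"
    for n
    by (simp add: power_add power_mult[symmetric] mult.commute)
  moreover have "exp (-lam) ^ 3 * (1 - 0) = exp (-3 * lam)"
    by (simp add: exp_of_nat_mult[symmetric])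
  ultimately have "(\<lambda>n. (1 - lam / real n) ^ (3 * n + 1)) \<longlonglongrightarrow> exp (-3 * lam)"
    by (simp only:)
  then have "\<forall>\<^sub>F n in sequentially. exp (-3 * lam) / 2 < (1 - lam / real n) ^ (3 * n + 1)"
    by (rule order_tendstoD(1)) simp
  then show ?thesis
    by (rule eventually_mono) simp
qed

lemma overlap_le_explicit:
  assumes "D \<ge> 2" and "lam > 0" and "h \<ge> 1" and "lam \<le> real n" and "2 * dary_size D h \<le> n"
    and "exp (-3 * lam) / 2 \<le> (1 - lam / real n) ^ (3 * n + 1)"
    and est: "estimator n (dary_size D h) est"
  shows "overlap D lam h n est \<le> (1 - lam * exp (-3 * lam) / (16 * real D)) * real (dary_size D h)"
proof -
  have "n > 0"
    using assms(2,4) by (auto intro: Nat.gr0I)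
  then interpret planted_tree_model D h n lam
    using assms(1-5) by unfold_locales auto
  define X where "X = real (n - dary_size D h) * (q * (1 - q) ^ (3 * n + 1)) / (4 * real D)"
  have "lam / 2 \<le> real (n - dary_size D h) * q"
  proof -
    have "real n / 2 \<le> real (n - dary_size D h)"
      using assms(5) by (simp add: of_nat_diff)
    then have "real n / 2 * q \<le> real (n - dary_size D h) * q"
      using edge_prob_nonneg by (rule mult_right_mono)
    then show ?thesis
      using \<open>n > 0\<close> by simp
  qed
  moreover have "0 \<le> real (n - dary_size D h) * q"
    using edge_prob_nonneg by (intro mult_nonneg_nonneg) auto
  ultimately have "lam / 2 * (exp (-3 * lam) / 2) \<le> real (n - dary_size D h) * q * (1 - q) ^ (3 * n + 1)"
    using assms(6) by (intro mult_mono) auto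
  then have "lam / 2 * (exp (-3 * lam) / 2) / (4 * real D) \<le> X"
    unfolding X_def by (intro divide_right_mono) (simp_all add: mult.assoc)
  then have "lam * exp (-3 * lam) / (16 * real D) \<le> X"
    by simp
  then have "real (dary_size D h) * (1 - X)
      \<le> real (dary_size D h) * (1 - lam * exp (-3 * lam) / (16 * real D))"
    by (intro mult_left_mono) auto
  then show ?thesis
    using order_trans[OF overlap_le[OF est, folded X_def]] by (simp add: mult.commute)
qed

theorem theorem11:
  fixes D :: nat and lam :: real and h :: "nat \<Rightarrow> nat"
  assumes "D \<ge> 2" and "lam > 0"
    and "\<forall>\<^sub>F n in sequentially. hbar D lam n \<le> enat (h n)"
    and "(\<lambda>n. real (dary_size D (h n))) \<in> o(\<lambda>n. real n)"
  shows "\<exists>\<delta>>0. \<forall>\<^sub>F n in sequentially. \<forall>est. estimator n (dary_size D (h n)) est \<longrightarrow>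
           overlap D lam (h n) n est \<le> (1 - \<delta>) * real (dary_size D (h n))"
proof (intro exI conjI)
  show "lam * exp (-3 * lam) / (16 * real D) > 0"
    using assms(1,2) by simp
  have "\<forall>\<^sub>F n in sequentially. h n \<ge> 1"
    using assms(3) by (rule eventually_mono) (rule one_le_of_hbar_le)
  moreover have "\<forall>\<^sub>F n in sequentially. lam \<le> real n"
    using filterlim_real_sequentially unfolding filterlim_at_top by blast
  moreover have "\<forall>\<^sub>F n in sequentially. 2 * dary_size D (h n) \<le> n"
    using landau_o.smallD[OF assms(4), of "1 / 2"] by (auto elim: eventually_mono)
  ultimately show "\<forall>\<^sub>F n in sequentially. \<forall>est. estimator n (dary_size D (h n)) est \<longrightarrow>
      overlap D lam (h n) n est
        \<le> (1 - lam * exp (-3 * lam) / (16 * real D)) * real (dary_size D (h n))"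
    using eventually_one_minus_power_ge[of lam]
    by eventually_elim (use assms(1,2) overlap_le_explicit in blast)
qed

end
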